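(* Let $a,b$ be non-negative integers with $a+b \ge 1$, and let $H_{a,b}$ be the graph defined in the context. Then \[ \lambda_3(H_{a,b}) = a+b-1 = \frac{|V(H_{a,b})|}{3}-1, \] and \[ \lim_{t \to \infty} \frac{\lambda_3\big(H_{a,b}^{[t]}\big)}{3(a+b)t} = \frac13 . \]
   Context: $\lambda_k(G)$ denotes the $k$-th largest eigenvalue (with multiplicity) of the adjacency matrix of a graph $G$. Let $v_1,\dots,v_6$ be the vertices of the 6-cycle $C_6$ in cyclic order. $H_{a,b}$ (the closed vertex multiplication of $C_6$ by $[a,b,a,b,a,b]$) is the graph obtained by replacing $v_i$ by a clique of size $a$ if $i$ is odd and of size $b$ if $i$ is even, and, for each edge $v_iv_{i+1}$ of $C_6$ (indices mod 6), joining every vertex of the clique of $v_i$ to every vertex of the clique of $v_{i+1}$; there are no other edges. Thus $|V(H_{a,b})| = 3(a+b)$. For a graph $H$ and a positive integer $t$, the closed blow-up $H^{[t]}$ is obtained by replacing each vertex of $H$ by a clique $K_t$ and each edge of $H$ by a complete bipartite graph $K_{t,t}$ between the corresponding cliques (non-adjacent vertices of $H$ give no edges). *)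

theory Defs
  imports Complex_Main "Jordan_Normal_Form.Char_Poly"
begin

text \<open>A finite simple graph is given by a duplicate-free list of its vertices
  (which fixes an ordering used to build the adjacency matrix) and a symmetric,
  irreflexive adjacency relation.\<close>

definition adj_matrix :: "'v list \<Rightarrow> ('v \<Rightarrow> 'v \<Rightarrow> bool) \<Rightarrow> real mat" where
  "adj_matrix vs E = mat (length vs) (length vs)
     (\<lambda>(i, j). if E (vs ! i) (vs ! j) then 1 else 0)"

text \<open>Eigenvalues of the (real symmetric) adjacency matrix, with multiplicity, in
  non-increasing order: the roots of the characteristic polynomial (all real).\<close>

definition eigenvalues_desc :: "'v list \<Rightarrow> ('v \<Rightarrow> 'v \<Rightarrow> bool) \<Rightarrow> real list" where
  "eigenvalues_desc vs E = rev (sorted_list_of_multiset (proots (char_poly (adj_matrix vs E))))"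

definition graph_lambda :: "nat \<Rightarrow> 'v list \<Rightarrow> ('v \<Rightarrow> 'v \<Rightarrow> bool) \<Rightarrow> real" where
  "graph_lambda k vs E = eigenvalues_desc vs E ! (k - 1)"

text \<open>The graph \<open>H_{a,b}\<close>: vertex \<open>(i, j)\<close> is the \<open>j\<close>-th vertex of the clique
  replacing \<open>v_{i+1}\<close> of \<open>C_6\<close> (\<open>i = 0..5\<close>); cliques at \<open>v_1, v_3, v_5\<close> (i even)
  have size \<open>a\<close>, the others size \<open>b\<close>.\<close>

definition H_size :: "nat \<Rightarrow> nat \<Rightarrow> nat \<Rightarrow> nat" where
  "H_size a b i = (if even i then a else b)"

definition H_verts :: "nat \<Rightarrow> nat \<Rightarrow> (nat \<times> nat) list" where
  "H_verts a b = concat (map (\<lambda>i. map (\<lambda>j. (i, j)) [0..<H_size a b i]) [0..<6])"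

definition H_adj :: "nat \<times> nat \<Rightarrow> nat \<times> nat \<Rightarrow> bool" where
  "H_adj u w \<longleftrightarrow> u \<noteq> w \<and>
     (fst u = fst w \<or> fst w = (fst u + 1) mod 6 \<or> fst u = (fst w + 1) mod 6)"

text \<open>Closed blow-up \<open>H^{[t]}\<close>: each vertex replaced by \<open>K_t\<close>, each edge by \<open>K_{t,t}\<close>.\<close>

definition blowup_verts :: "'v list \<Rightarrow> nat \<Rightarrow> ('v \<times> nat) list" where
  "blowup_verts vs t = concat (map (\<lambda>v. map (\<lambda>s. (v, s)) [0..<t]) vs)"

definition blowup_adj :: "('v \<Rightarrow> 'v \<Rightarrow> bool) \<Rightarrow> 'v \<times> nat \<Rightarrow> 'v \<times> nat \<Rightarrow> bool" where
  "blowup_adj E x y \<longleftrightarrow> x \<noteq> y \<and> (fst x = fst y \<or> E (fst x) (fst y))"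

end

theory Submission
  imports Defs
begin

(* The closed neighbourhood matrix I + A(C6) of the 6-cycle has rank 4, so the adjacency matrix
   of any closed vertex multiplication of C6 factors as A = L R - I with L of size n x 4 and
   R of size 4 x n, both depending only on the classes of the vertices.  By Sylvester's
   determinant identity, (x+1)^4 char_poly(L R - I) = (x+1)^n char_poly(R L - I), and for class sizes
   [a,b,a,b,a,b] the 4 x 4 matrix R L is block diagonal with blocks [[a,2b],[2a,b]] and (a+b) I.
   So apart from the eigenvalue -1 the spectrum consists of a+b-1 (twice) and
   (a+b-2 +- sqrt((a-b)^2 + 16ab))/2, the larger of which is at least a+b-1 and the smaller at
   most -1: hence lambda_3 = a+b-1.  The closed blow-up H_{a,b}^[t] is again a closed vertex
   multiplication of C6, with class sizes [ta,tb,...], so its lambda_3 is t(a+b)-1. *)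

lemma det_four_block_eliminate_upper:
  fixes U V :: "'a::idom mat" and x :: 'a
  assumes U: "U \<in> carrier_mat n m" and V: "V \<in> carrier_mat m n"
  shows "det (four_block_mat (x \<cdot>\<^sub>m 1\<^sub>m n) U V (1\<^sub>m m)) = det (x \<cdot>\<^sub>m 1\<^sub>m n - U * V)"
proof -
  let ?M = "four_block_mat (x \<cdot>\<^sub>m 1\<^sub>m n) U V (1\<^sub>m m)"
  let ?L = "four_block_mat (1\<^sub>m n) (-U) (0\<^sub>m m n) (1\<^sub>m m)"
  have "det ?M = det (?L * ?M)"
    using U V by (subst det_mult[where n="n+m"])
      (auto simp: det_four_block_mat_lower_left_zero[where n=n and m=m])
  also have "?L * ?M = four_block_mat (1\<^sub>m n * (x \<cdot>\<^sub>m 1\<^sub>m n) + - U * V) (1\<^sub>m n * U + - U * 1\<^sub>m m)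
     (0\<^sub>m m n * (x \<cdot>\<^sub>m 1\<^sub>m n) + 1\<^sub>m m * V) (0\<^sub>m m n * U + 1\<^sub>m m * 1\<^sub>m m)"
    by (rule mult_four_block_mat) (use U V in auto)
  also have "\<dots> = four_block_mat (x \<cdot>\<^sub>m 1\<^sub>m n - U * V) (0\<^sub>m n m) V (1\<^sub>m m)"
    using U V by (intro cong_four_block_mat) (auto simp: add_uminus_minus_mat)
  also have "det \<dots> = det (x \<cdot>\<^sub>m 1\<^sub>m n - U * V)"
    by (subst det_four_block_mat_upper_right_zero[where n=n and m=m]) (use U V in auto)
  finally show ?thesis .
qed

lemma det_four_block_eliminate_lower:
  fixes U V :: "'a::idom mat" and x :: 'a
  assumes U: "U \<in> carrier_mat n m" and V: "V \<in> carrier_mat m n"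
  shows "x ^ m * det (four_block_mat (x \<cdot>\<^sub>m 1\<^sub>m n) U V (1\<^sub>m m))
       = x ^ n * det (x \<cdot>\<^sub>m 1\<^sub>m m - V * U)"
proof -
  let ?M = "four_block_mat (x \<cdot>\<^sub>m 1\<^sub>m n) U V (1\<^sub>m m)"
  let ?L = "four_block_mat (1\<^sub>m n) (0\<^sub>m n m) (-V) (x \<cdot>\<^sub>m 1\<^sub>m m)"
  have "x ^ m * det ?M = det (?L * ?M)"
    using U V by (subst det_mult[where n="n+m"])
      (auto simp: det_four_block_mat_upper_right_zero[where n=n and m=m])
  also have "?L * ?M = four_block_mat (1\<^sub>m n * (x \<cdot>\<^sub>m 1\<^sub>m n) + 0\<^sub>m n m * V) (1\<^sub>m n * U + 0\<^sub>m n m * 1\<^sub>m m)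
     (- V * (x \<cdot>\<^sub>m 1\<^sub>m n) + (x \<cdot>\<^sub>m 1\<^sub>m m) * V) (- V * U + (x \<cdot>\<^sub>m 1\<^sub>m m) * 1\<^sub>m m)"
    by (rule mult_four_block_mat) (use U V in auto)
  also have "\<dots> = four_block_mat (x \<cdot>\<^sub>m 1\<^sub>m n) U (0\<^sub>m m n) (x \<cdot>\<^sub>m 1\<^sub>m m - V * U)"
    using U V by (intro cong_four_block_mat) (auto simp: add_uminus_minus_mat
      mult_smult_distrib[OF V one_carrier_mat] mult_smult_assoc_mat[OF one_carrier_mat V]
      comm_add_mat[of "- (V * U)" m m])
  also have "det \<dots> = x ^ n * det (x \<cdot>\<^sub>m 1\<^sub>m m - V * U)"
    by (subst det_four_block_mat_lower_left_zero[where n=n and m=m]) (use U V in auto)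
  finally show ?thesis .
qed

lemma det_sylvester:
  fixes U V :: "'a::idom mat" and x :: 'a
  assumes "U \<in> carrier_mat n m" and "V \<in> carrier_mat m n"
  shows "x ^ m * det (x \<cdot>\<^sub>m 1\<^sub>m n - U * V) = x ^ n * det (x \<cdot>\<^sub>m 1\<^sub>m m - V * U)"
  using det_four_block_eliminate_upper[OF assms, of x] det_four_block_eliminate_lower[OF assms, of x]
  by simp

lemma char_poly_minus_smult_one:
  fixes A :: "'a::comm_ring_1 mat"
  assumes "A \<in> carrier_mat n n"
  shows "char_poly (A - c \<cdot>\<^sub>m 1\<^sub>m n) = det ([:c, 1:] \<cdot>\<^sub>m 1\<^sub>m n - map_mat (\<lambda>a. [:a:]) A)"
  unfolding char_poly_def char_poly_matrix_def
  by (rule arg_cong[where f=det], rule eq_matI) (use assms in \<open>auto simp: one_pCons\<close>)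

lemma char_poly_mult_shift:
  fixes U V :: "'a::idom mat"
  assumes U: "U \<in> carrier_mat n m" and V: "V \<in> carrier_mat m n"
  shows "[:c, 1:] ^ m * char_poly (U * V - c \<cdot>\<^sub>m 1\<^sub>m n)
       = [:c, 1:] ^ n * char_poly (V * U - c \<cdot>\<^sub>m 1\<^sub>m m)"
  using U V det_sylvester[of "map_mat (\<lambda>a. [:a:]) U" n m "map_mat (\<lambda>a. [:a:]) V" "[:c, 1:]"]
  by (simp add: char_poly_minus_smult_one map_poly_mult(1))

lemma det_2x2:
  fixes A :: "'a::comm_ring_1 mat"
  assumes A: "A \<in> carrier_mat 2 2"
  shows "det A = A $$ (0,0) * A $$ (1,1) - A $$ (0,1) * A $$ (1,0)"
proof -
  have cofactors: "cofactor A 0 0 = A $$ (1,1)" "cofactor A 0 1 = - A $$ (1,0)"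
    unfolding cofactor_def using A by (subst det_single; auto simp: mat_delete_def)+
  have "det A = (\<Sum>j<2. A $$ (0,j) * cofactor A 0 j)"
    by (rule laplace_expansion_row[OF A]) simp
  also have "\<dots> = A $$ (0,0) * A $$ (1,1) - A $$ (0,1) * A $$ (1,0)"
    by (simp add: numeral_eq_Suc cofactors[unfolded One_nat_def])
  finally show ?thesis .
qed

lemma char_poly_2x2:
  fixes A :: "'a::comm_ring_1 mat"
  assumes "A \<in> carrier_mat 2 2"
  shows "char_poly A = [:- A $$ (0,0), 1:] * [:- A $$ (1,1), 1:] - [:A $$ (0,1) * A $$ (1,0):]"
  using assms by (simp add: char_poly_def det_2x2 char_poly_matrix_def one_pCons)

lemma char_poly_four_block_diag:
  fixes A B :: "'a::idom mat"
  assumes A: "A \<in> carrier_mat n n" and B: "B \<in> carrier_mat m m"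
  shows "char_poly (four_block_mat A (0\<^sub>m n m) (0\<^sub>m m n) B) = char_poly A * char_poly B"
proof -
  have "char_poly_matrix (four_block_mat A (0\<^sub>m n m) (0\<^sub>m m n) B)
      = four_block_mat (char_poly_matrix A) (0\<^sub>m n m) (0\<^sub>m m n) (char_poly_matrix B)"
    using A B by (intro eq_matI) (auto simp: char_poly_matrix_def four_block_mat_def)
  then show ?thesis
    unfolding char_poly_def
    by (simp add: det_four_block_mat_upper_right_zero[where n=n and m=m] A B)
qed

lemma quadratic_poly_factor:
  fixes u v w :: real
  assumes "(u - v)\<^sup>2 + 4 * w \<ge> 0"
  defines "\<delta> \<equiv> sqrt ((u - v)\<^sup>2 + 4 * w)"
  shows "[:-u, 1:] * [:-v, 1:] - [:w:] = [:- ((u + v + \<delta>) / 2), 1:] * [:- ((u + v - \<delta>) / 2), 1:]"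
proof -
  have "\<delta> * \<delta> = (u - v)\<^sup>2 + 4 * w" using assms by simp
  then show ?thesis by (simp add: field_simps power2_eq_square)
qed

lemma rev_sorted_list_of_multiset_nth_2:
  fixes r v :: "'a::linorder"
  assumes "\<forall>x\<in>#R. x \<le> v" and "v \<le> r"
  shows "rev (sorted_list_of_multiset ({#r, v, v#} + R)) ! 2 = v"
proof -
  let ?xs = "sorted_list_of_multiset R @ [v, v, r]"
  have "sorted ?xs" using assms by (auto simp: sorted_append)
  moreover have "{#r, v, v#} + R = mset ?xs" by simp
  ultimately have "sorted_list_of_multiset ({#r, v, v#} + R) = ?xs"
    by (metis sorted_list_of_multiset_mset sorted_sort_id)
  then show ?thesis by (simp add: nth_append)
qed

lemma third_largest_root:
  fixes p :: "real poly"
  assumes eq: "[:-z, 1:] ^ m * p = [:-z, 1:] ^ n * ([:-r, 1:] * [:-q, 1:] * [:-v, 1:]\<^sup>2)"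
    and qz: "q \<le> z" and zv: "z < v" and vr: "v \<le> r"
  shows "rev (sorted_list_of_multiset (proots p)) ! 2 = v"
proof -
  have "p \<noteq> 0"
    using eq by (metis mult_zero_right mult_eq_0_iff power_eq_0_iff pCons_eq_0_iff one_neq_zero)
  then have "replicate_mset m z + proots p = replicate_mset n z + {#r, q, v, v#}"
    using arg_cong[OF eq, of proots]
    by (simp del: mult_pCons_left mult_pCons_right
        add: proots_mult proots_power proots_linear_factor numeral_2_eq_2 add_ac)
  then have "{#x \<in># replicate_mset m z + proots p. x \<noteq> z#}
      = {#x \<in># replicate_mset n z + {#r, q, v, v#}. x \<noteq> z#}"
    by (rule arg_cong)
  moreover have "{#x \<in># replicate_mset k z. x \<noteq> z#} = {#}" for k
    by (induction k) auto
  ultimately have "{#x \<in># proots p. x \<noteq> z#} = {#r, v, v#} + {#x \<in># {#q#}. x \<noteq> z#}"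
    using zv vr by auto
  then have "proots p = {#r, v, v#} + ({#x \<in># {#q#}. x \<noteq> z#} + {#x \<in># proots p. x = z#})"
    using multiset_partition[of "proots p" "\<lambda>x. x \<noteq> z"] by (simp add: add.assoc)
  moreover have "\<forall>x \<in># {#x \<in># {#q#}. x \<noteq> z#} + {#x \<in># proots p. x = z#}. x \<le> v"
    using qz zv by auto
  ultimately show ?thesis using rev_sorted_list_of_multiset_nth_2 vr by metis
qed

lemma sum_nth_by_class:
  fixes h :: "nat \<Rightarrow> 'a::comm_semiring_1"
  assumes "\<forall>v\<in>set vs. cl v < m"
  shows "(\<Sum>j<length vs. h (cl (vs ! j))) = (\<Sum>c<m. of_nat (length (filter (\<lambda>v. cl v = c) vs)) * h c)"
proof -
  have "(\<Sum>j<length vs. h (cl (vs ! j)))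
      = (\<Sum>c<m. \<Sum>j | j \<in> {..<length vs} \<and> cl (vs ! j) = c. h (cl (vs ! j)))"
    using assms by (intro sum.group[symmetric]) auto
  also have "\<dots> = (\<Sum>c<m. of_nat (length (filter (\<lambda>v. cl v = c) vs)) * h c)"
    by (intro sum.cong) (simp_all add: length_filter_conv_card)
  finally show ?thesis .
qed

definition C6_closed_adj :: "nat \<Rightarrow> nat \<Rightarrow> bool" where
  "C6_closed_adj c d \<longleftrightarrow> c = d \<or> d = (c + 1) mod 6 \<or> c = (d + 1) mod 6"

lemma C6_closed_adj_refl [simp]: "C6_closed_adj c c"
  by (simp add: C6_closed_adj_def)

(* A rank factorisation of I + A(C6), whose eigenvalues are 3, 2, 2, 0, 0, -1: the first two
   rows of the left factor are the indicators of the even and odd classes (spanning the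
   eigenvectors for 3 and -1), the last two span the eigenspace for 2.  The right factor is chosen
   so that its product with diag(a,b,a,b,a,b) and the left factor is the block diagonal
   C6_compression. *)
definition C6_left_factor :: "nat \<Rightarrow> nat \<Rightarrow> real" where
  "C6_left_factor k c = [[1,0,1,0,1,0], [0,1,0,1,0,1], [1,1,0,-1,-1,0], [0,1,1,0,-1,-1]] ! k ! c"

definition C6_right_factor :: "nat \<Rightarrow> nat \<Rightarrow> real" where
  "C6_right_factor k c = [[1/3,2/3,1/3,2/3,1/3,2/3], [2/3,1/3,2/3,1/3,2/3,1/3],
     [2/3,1/3,-1/3,-2/3,-1/3,1/3], [-1/3,1/3,2/3,1/3,-1/3,-2/3]] ! k ! c"

definition C6_compression :: "real \<Rightarrow> real \<Rightarrow> nat \<Rightarrow> nat \<Rightarrow> real" where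
  "C6_compression a b k l = [[a,2*b,0,0], [2*a,b,0,0], [0,0,a+b,0], [0,0,0,a+b]] ! k ! l"

lemma C6_factor_product:
  assumes "c < 6" and "d < 6"
  shows "(\<Sum>k<4. C6_left_factor k c * C6_right_factor k d) = (if C6_closed_adj c d then 1 else 0)"
proof -
  have sum4: "(\<Sum>k<4. f k) = f 0 + f 1 + f 2 + f 3" for f :: "nat \<Rightarrow> real"
    by (simp add: numeral_eq_Suc)
  have "c = 0 \<or> c = 1 \<or> c = 2 \<or> c = 3 \<or> c = 4 \<or> c = 5"
    and "d = 0 \<or> d = 1 \<or> d = 2 \<or> d = 3 \<or> d = 4 \<or> d = 5" using assms by auto
  then show ?thesis unfolding sum4
    by (elim disjE) (simp_all add: C6_left_factor_def C6_right_factor_def C6_closed_adj_def)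
qed

lemma C6_factor_weighted_product:
  assumes "k < 4" and "l < 4"
  shows "(\<Sum>c<6. real (H_size na nb c) * (C6_right_factor k c * C6_left_factor l c))
       = C6_compression (real na) (real nb) k l"
proof -
  have sum6: "(\<Sum>c<6. f c) = f 0 + f 1 + f 2 + f 3 + f 4 + f 5" for f :: "nat \<Rightarrow> real"
    by (simp add: numeral_eq_Suc)
  have "k = 0 \<or> k = 1 \<or> k = 2 \<or> k = 3" and "l = 0 \<or> l = 1 \<or> l = 2 \<or> l = 3"
    using assms by auto
  then show ?thesis unfolding sum6
    by (elim disjE) (simp_all add: H_size_def C6_left_factor_def C6_right_factor_def C6_compression_def)
qed

definition class_left_factor :: "('v \<Rightarrow> nat) \<Rightarrow> 'v list \<Rightarrow> real mat" where
  "class_left_factor cl vs = mat (length vs) 4 (\<lambda>(i, k). C6_left_factor k (cl (vs ! i)))"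

definition class_right_factor :: "('v \<Rightarrow> nat) \<Rightarrow> 'v list \<Rightarrow> real mat" where
  "class_right_factor cl vs = mat 4 (length vs) (\<lambda>(k, j). C6_right_factor k (cl (vs ! j)))"

lemma adj_matrix_eq_class_factors:
  assumes dist: "distinct vs" and cl: "\<forall>v\<in>set vs. cl v < 6"
    and E: "\<And>u w. E u w \<longleftrightarrow> u \<noteq> w \<and> C6_closed_adj (cl u) (cl w)"
  shows "adj_matrix vs E = class_left_factor cl vs * class_right_factor cl vs - 1\<^sub>m (length vs)"
proof (rule eq_matI)
  fix i j
  assume "i < dim_row (class_left_factor cl vs * class_right_factor cl vs - 1\<^sub>m (length vs))"
    and "j < dim_col (class_left_factor cl vs * class_right_factor cl vs - 1\<^sub>m (length vs))"
  then have i: "i < length vs" and j: "j < length vs"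
    by (auto simp: class_left_factor_def class_right_factor_def)
  have "(class_left_factor cl vs * class_right_factor cl vs) $$ (i, j)
      = (\<Sum>k<4. C6_left_factor k (cl (vs ! i)) * C6_right_factor k (cl (vs ! j)))"
    using i j by (simp add: class_left_factor_def class_right_factor_def scalar_prod_def atLeast0LessThan)
  also have "\<dots> = (if C6_closed_adj (cl (vs ! i)) (cl (vs ! j)) then 1 else 0)"
    using cl i j by (intro C6_factor_product) auto
  finally show "adj_matrix vs E $$ (i, j)
      = (class_left_factor cl vs * class_right_factor cl vs - 1\<^sub>m (length vs)) $$ (i, j)"
    using i j dist E
    by (auto simp: adj_matrix_def class_left_factor_def nth_eq_iff_index_eq)
qed (auto simp: adj_matrix_def class_left_factor_def class_right_factor_def)

lemma class_factors_swap:
  assumes cl: "\<forall>v\<in>set vs. cl v < 6"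
    and count: "\<And>c. c < 6 \<Longrightarrow> length (filter (\<lambda>v. cl v = c) vs) = H_size na nb c"
  shows "class_right_factor cl vs * class_left_factor cl vs
       = mat 4 4 (\<lambda>(k, l). C6_compression (real na) (real nb) k l)"
proof (rule eq_matI)
  fix k l
  assume "k < dim_row (mat 4 4 (\<lambda>(k, l). C6_compression (real na) (real nb) k l))"
    and "l < dim_col (mat 4 4 (\<lambda>(k, l). C6_compression (real na) (real nb) k l))"
  then have k: "k < 4" and l: "l < 4" by auto
  have "(class_right_factor cl vs * class_left_factor cl vs) $$ (k, l)
      = (\<Sum>j<length vs. C6_right_factor k (cl (vs ! j)) * C6_left_factor l (cl (vs ! j)))"
    using k l by (simp add: class_left_factor_def class_right_factor_def scalar_prod_def atLeast0LessThan)
  also have "\<dots> = (\<Sum>c<6. real (length (filter (\<lambda>v. cl v = c) vs))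
                            * (C6_right_factor k c * C6_left_factor l c))"
    by (rule sum_nth_by_class[OF cl])
  also have "\<dots> = (\<Sum>c<6. real (H_size na nb c) * (C6_right_factor k c * C6_left_factor l c))"
    using count by (intro sum.cong) auto
  also have "\<dots> = C6_compression (real na) (real nb) k l"
    by (rule C6_factor_weighted_product[OF k l])
  finally show "(class_right_factor cl vs * class_left_factor cl vs) $$ (k, l)
      = mat 4 4 (\<lambda>(k, l). C6_compression (real na) (real nb) k l) $$ (k, l)"
    using k l by simp
qed (auto simp: class_left_factor_def class_right_factor_def)

lemma char_poly_C6_compression:
  "char_poly (mat 4 4 (\<lambda>(k, l). C6_compression a b k l) - 1\<^sub>m 4)
     = ([:- (a - 1), 1:] * [:- (b - 1), 1:] - [:4 * a * b:]) * [:- (a + b - 1), 1:]\<^sup>2"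
proof -
  let ?W = "mat 4 4 (\<lambda>(k, l). C6_compression a b k l) - 1\<^sub>m 4"
  define P where "P = mat 2 2 (\<lambda>(i, j). ?W $$ (i, j))"
  define Q where "Q = mat 2 2 (\<lambda>(i, j). ?W $$ (i + 2, j + 2))"
  have "?W = four_block_mat P (0\<^sub>m 2 2) (0\<^sub>m 2 2) Q"
  proof (rule eq_matI)
    fix i j
    assume "i < dim_row (four_block_mat P (0\<^sub>m 2 2) (0\<^sub>m 2 2) Q)"
      and "j < dim_col (four_block_mat P (0\<^sub>m 2 2) (0\<^sub>m 2 2) Q)"
    then have "i = 0 \<or> i = 1 \<or> i = 2 \<or> i = 3" and "j = 0 \<or> j = 1 \<or> j = 2 \<or> j = 3"
      by (auto simp: P_def Q_def)
    then show "?W $$ (i, j) = four_block_mat P (0\<^sub>m 2 2) (0\<^sub>m 2 2) Q $$ (i, j)"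
      by (elim disjE) (simp_all add: P_def Q_def C6_compression_def four_block_mat_def)
  qed (auto simp: P_def Q_def)
  then have "char_poly ?W = char_poly P * char_poly Q"
    by (metis char_poly_four_block_diag mat_carrier P_def Q_def)
  moreover have "char_poly P = [:- (a - 1), 1:] * [:- (b - 1), 1:] - [:4 * a * b:]"
    by (subst char_poly_2x2) (auto simp: P_def C6_compression_def)
  moreover have "char_poly Q = [:- (a + b - 1), 1:]\<^sup>2"
    by (subst char_poly_2x2) (auto simp: Q_def C6_compression_def power2_eq_square)
  ultimately show ?thesis by simp
qed

lemma lambda3_C6_closed_multiplication:
  fixes vs :: "'v list" and cl :: "'v \<Rightarrow> nat" and E :: "'v \<Rightarrow> 'v \<Rightarrow> bool"
  assumes dist: "distinct vs" and cl: "\<forall>v\<in>set vs. cl v < 6"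
    and count: "\<And>c. c < 6 \<Longrightarrow> length (filter (\<lambda>v. cl v = c) vs) = H_size na nb c"
    and E: "\<And>u w. E u w \<longleftrightarrow> u \<noteq> w \<and> C6_closed_adj (cl u) (cl w)"
    and nonempty: "na + nb \<ge> 1"
  shows "graph_lambda 3 vs E = real (na + nb) - 1"
proof -
  define a b where "a = real na" and "b = real nb"
  define \<delta> where "\<delta> = sqrt ((a - 1 - (b - 1))\<^sup>2 + 4 * (4 * a * b))"
  let ?L = "class_left_factor cl vs" and ?R = "class_right_factor cl vs"
  have "a \<ge> 0" "b \<ge> 0" "a + b \<ge> 1" using nonempty by (auto simp: a_def b_def)
  then have disc: "(a - 1 - (b - 1))\<^sup>2 + 4 * (4 * a * b) \<ge> (a + b)\<^sup>2"
    by (simp add: power2_eq_square algebra_simps)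
  then have \<delta>: "\<delta> \<ge> a + b" unfolding \<delta>_def by (rule real_le_rsqrt)
  have "(1::real) \<cdot>\<^sub>m 1\<^sub>m k = 1\<^sub>m k" for k by (rule eq_matI) auto
  then have "[:1, 1:] ^ 4 * char_poly (adj_matrix vs E) = [:1, 1:] ^ length vs * char_poly (?R * ?L - 1\<^sub>m 4)"
    using char_poly_mult_shift[of ?L "length vs" 4 ?R 1]
    by (simp add: adj_matrix_eq_class_factors[OF dist cl E] class_left_factor_def class_right_factor_def)
  also have "?R * ?L = mat 4 4 (\<lambda>(k, l). C6_compression a b k l)"
    unfolding a_def b_def by (rule class_factors_swap[OF cl count])
  also have "char_poly (\<dots> - 1\<^sub>m 4) = [:- ((a - 1 + (b - 1) + \<delta>) / 2), 1:]
      * [:- ((a - 1 + (b - 1) - \<delta>) / 2), 1:] * [:- (a + b - 1), 1:]\<^sup>2"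
    unfolding char_poly_C6_compression \<delta>_def
    by (subst quadratic_poly_factor) (use disc in \<open>auto intro: order_trans[OF zero_le_power2]\<close>)
  finally have "rev (sorted_list_of_multiset (proots (char_poly (adj_matrix vs E)))) ! 2 = a + b - 1"
    by (rule third_largest_root[where z="-1", unfolded minus_minus])
      (use \<delta> \<open>a + b \<ge> 1\<close> in auto)
  then show ?thesis
    by (simp add: graph_lambda_def eigenvalues_desc_def a_def b_def)
qed

lemma distinct_concat_map_Pair:
  assumes "distinct xs" and "\<And>i. distinct (f i)"
  shows "distinct (concat (map (\<lambda>i. map (Pair i) (f i)) xs))"
  using assms by (induction xs) (auto simp: distinct_map inj_on_def)

lemma upt_6: "[0..<6] = [0, 1, 2, 3, 4, 5 :: nat]"
  by (simp add: upt_rec)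

lemma distinct_H_verts: "distinct (H_verts a b)"
  unfolding H_verts_def by (rule distinct_concat_map_Pair) auto

lemma set_H_verts: "set (H_verts a b) = {(i, j). i < 6 \<and> j < H_size a b i}"
  by (auto simp: H_verts_def)

lemma length_filter_H_verts:
  assumes "c < 6"
  shows "length (filter (\<lambda>v. fst v = c) (H_verts a b)) = H_size a b c"
proof -
  have "c = 0 \<or> c = 1 \<or> c = 2 \<or> c = 3 \<or> c = 4 \<or> c = 5" using assms by auto
  then show ?thesis
    by (elim disjE) (simp_all add: H_verts_def upt_6 filter_map o_def)
qed

lemma length_H_verts: "length (H_verts a b) = 3 * (a + b)"
  by (simp add: H_verts_def upt_6 H_size_def)

lemma H_adj_iff: "H_adj u w \<longleftrightarrow> u \<noteq> w \<and> C6_closed_adj (fst u) (fst w)"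
  by (simp add: H_adj_def C6_closed_adj_def)

lemma distinct_blowup_verts: "distinct vs \<Longrightarrow> distinct (blowup_verts vs t)"
  unfolding blowup_verts_def by (rule distinct_concat_map_Pair) auto

lemma set_blowup_verts: "set (blowup_verts vs t) = set vs \<times> {..<t}"
  by (auto simp: blowup_verts_def)

lemma length_filter_blowup_verts:
  "length (filter (\<lambda>x. P (fst x)) (blowup_verts vs t)) = t * length (filter P vs)"
  by (induction vs) (auto simp: blowup_verts_def filter_map o_def)

lemma blowup_adj_iff:
  assumes "\<And>u w. E u w \<longleftrightarrow> u \<noteq> w \<and> R (cl u) (cl w)" and "\<And>c. R c c"
  shows "blowup_adj E x y \<longleftrightarrow> x \<noteq> y \<and> R (cl (fst x)) (cl (fst y))"
  using assms by (auto simp: blowup_adj_def)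

lemma LIMSEQ_affine_div_linear:
  fixes c d k :: real
  assumes "c \<noteq> 0" and "k \<noteq> 0"
  shows "(\<lambda>t. (c * real t - d) / (k * c * real t)) \<longlonglongrightarrow> 1 / k"
proof -
  have "(\<lambda>t. 1 / k - d / (k * c) * inverse (real t)) \<longlonglongrightarrow> 1 / k - d / (k * c) * 0"
    by (intro tendsto_intros lim_inverse_n)
  moreover have "\<forall>\<^sub>F t in sequentially.
      1 / k - d / (k * c) * inverse (real t) = (c * real t - d) / (k * c * real t)"
    using assms by (intro eventually_sequentiallyI[of 1]) (simp add: field_simps)
  ultimately show ?thesis by (simp add: Lim_transform_eventually)
qed

lemma lambda3_H:
  assumes "a + b \<ge> 1"
  shows "graph_lambda 3 (H_verts a b) H_adj = real (a + b) - 1"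
  by (rule lambda3_C6_closed_multiplication)
    (use assms in \<open>auto simp: distinct_H_verts set_H_verts length_filter_H_verts H_adj_iff\<close>)

lemma blowup_H_adj_iff:
  "blowup_adj H_adj x y \<longleftrightarrow> x \<noteq> y \<and> C6_closed_adj (fst (fst x)) (fst (fst y))"
  by (rule blowup_adj_iff) (auto simp: H_adj_iff)

lemma lambda3_blowup_H:
  assumes "a + b \<ge> 1" and "t \<ge> 1"
  shows "graph_lambda 3 (blowup_verts (H_verts a b) t) (blowup_adj H_adj) = real (a + b) * real t - 1"
proof -
  have nonempty: "t * a + t * b \<ge> 1"
    using mult_le_mono[OF assms(2,1)] by (simp add: algebra_simps)
  have "graph_lambda 3 (blowup_verts (H_verts a b) t) (blowup_adj H_adj) = real (t * a + t * b) - 1"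
    by (rule lambda3_C6_closed_multiplication[where cl="\<lambda>x. fst (fst x)"])
      (use nonempty in \<open>auto simp: distinct_blowup_verts distinct_H_verts set_blowup_verts
        set_H_verts length_filter_blowup_verts[where P="\<lambda>v. fst v = _"] length_filter_H_verts
        H_size_def blowup_H_adj_iff\<close>)
  then show ?thesis by (simp add: algebra_simps)
qed

theorem theorem2p2:
  fixes a b :: nat
  assumes "a + b \<ge> 1"
  shows "graph_lambda 3 (H_verts a b) H_adj = real (a + b) - 1
       \<and> graph_lambda 3 (H_verts a b) H_adj = real (length (H_verts a b)) / 3 - 1
       \<and> (\<lambda>t. graph_lambda 3 (blowup_verts (H_verts a b) t) (blowup_adj H_adj)
              / (3 * real (a + b) * real t)) \<longlonglongrightarrow> 1 / 3"
proof -
  have "\<forall>\<^sub>F t in sequentially. (real (a + b) * real t - 1) / (3 * real (a + b) * real t)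
      = graph_lambda 3 (blowup_verts (H_verts a b) t) (blowup_adj H_adj) / (3 * real (a + b) * real t)"
    using assms by (intro eventually_sequentiallyI[of 1]) (simp add: lambda3_blowup_H)
  with LIMSEQ_affine_div_linear[of "real (a + b)" 3 1] assms
  have "(\<lambda>t. graph_lambda 3 (blowup_verts (H_verts a b) t) (blowup_adj H_adj)
      / (3 * real (a + b) * real t)) \<longlonglongrightarrow> 1 / 3"
    by (auto intro: Lim_transform_eventually)
  then show ?thesis using lambda3_H[OF assms] by (simp add: length_H_verts)
qed

end
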